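(* Let $(X,\mathcal U)$ be a non-archimedean metrizable non-discrete uniform space. Then $A_{NA}(X,\mathcal U)$ is not complete.
   Context: A uniform space is non-archimedean if its (Hausdorff) uniformity has a base of equivalence relations; it is discrete if the diagonal is an entourage. $A_{NA}(X,\mathcal U)$ is the free abelian non-archimedean group of $(X,\mathcal U)$: an abelian Hausdorff topological group with a local base at $0$ of open subgroups, together with a uniformly continuous map $i\colon X\to A_{NA}$ such that every uniformly continuous map from $X$ into an abelian non-archimedean group factors uniquely as a continuous homomorphism composed with $i$. Complete means complete with respect to the group's uniformity. *)

theory Defs
  imports "HOL-Analysis.Analysis" "HOL-Library.Poly_Mapping"
begin

text \<open>The underlying set X of the uniform space is the universe of the type 'a;
  the uniformity is the filter U of entourages on 'a \<times> 'a.\<close>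

definition entourage :: "('a \<times> 'a) filter \<Rightarrow> ('a \<times> 'a) set \<Rightarrow> bool" where
  "entourage U E \<longleftrightarrow> eventually (\<lambda>p. p \<in> E) U"

definition uniformity_axioms :: "('a \<times> 'a) filter \<Rightarrow> bool" where
  "uniformity_axioms U \<longleftrightarrow>
     (\<forall>E. entourage U E \<longrightarrow> Id \<subseteq> E) \<and>
     (\<forall>E. entourage U E \<longrightarrow> entourage U (E\<inverse>)) \<and>
     (\<forall>E. entourage U E \<longrightarrow> (\<exists>D. entourage U D \<and> D O D \<subseteq> E))"

definition hausdorff_uniformity :: "('a \<times> 'a) filter \<Rightarrow> bool" where
  "hausdorff_uniformity U \<longleftrightarrow> (\<forall>x y. (\<forall>E. entourage U E \<longrightarrow> (x, y) \<in> E) \<longrightarrow> x = y)"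

definition uniform_space_on :: "('a \<times> 'a) filter \<Rightarrow> bool" where
  "uniform_space_on U \<longleftrightarrow> uniformity_axioms U \<and> hausdorff_uniformity U"

definition non_archimedean :: "('a \<times> 'a) filter \<Rightarrow> bool" where
  "non_archimedean U \<longleftrightarrow>
     (\<forall>E. entourage U E \<longrightarrow> (\<exists>R. equiv UNIV R \<and> entourage U R \<and> R \<subseteq> E))"

definition discrete_uniformity :: "('a \<times> 'a) filter \<Rightarrow> bool" where
  "discrete_uniformity U \<longleftrightarrow> entourage U Id"

definition is_metric :: "('a \<Rightarrow> 'a \<Rightarrow> real) \<Rightarrow> bool" where
  "is_metric d \<longleftrightarrow>
     (\<forall>x y. 0 \<le> d x y) \<and> (\<forall>x y. d x y = 0 \<longleftrightarrow> x = y) \<and>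
     (\<forall>x y. d x y = d y x) \<and> (\<forall>x y z. d x z \<le> d x y + d y z)"

definition metrizable_uniformity :: "('a \<times> 'a) filter \<Rightarrow> bool" where
  "metrizable_uniformity U \<longleftrightarrow>
     (\<exists>d. is_metric d \<and> U = (INF e\<in>{0<..}. principal {(x, y). d x y < e}))"

text \<open>Underlying group: the free abelian group on X, i.e. finitely supported
  functions 'a =>0 int, with insertion of generators
  i x = Poly_Mapping.single x 1.  Its topology is the finest non-archimedean group
  topology making i uniformly continuous: the neighbourhoods of 0 have as base all
  subgroups H of the free abelian group such that {(x,y). i x - i y \<in> H} is an
  entourage of U.  This is the standard construction of A_NA(X,U), which satisfies
  the universal property in the context.\<close>

definition free_gen :: "'a \<Rightarrow> ('a \<Rightarrow>\<^sub>0 int)" where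
  "free_gen x = Poly_Mapping.single x 1"

definition is_subgroup :: "('g::ab_group_add) set \<Rightarrow> bool" where
  "is_subgroup H \<longleftrightarrow> 0 \<in> H \<and> (\<forall>a\<in>H. \<forall>b\<in>H. a - b \<in> H)"

definition ANA_nbhd_subgroups :: "('a \<times> 'a) filter \<Rightarrow> ('a \<Rightarrow>\<^sub>0 int) set set" where
  "ANA_nbhd_subgroups U =
     {H. is_subgroup H \<and> entourage U {(x, y). free_gen x - free_gen y \<in> H}}"

definition ANA_open :: "('a \<times> 'a) filter \<Rightarrow> ('a \<Rightarrow>\<^sub>0 int) set \<Rightarrow> bool" where
  "ANA_open U S \<longleftrightarrow> (\<forall>a\<in>S. \<exists>H\<in>ANA_nbhd_subgroups U. (\<lambda>h. a + h) ` H \<subseteq> S)"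

text \<open>The group uniformity of A_NA(X,U) has as base the sets
  {(a,b). b - a \<in> H} for H in the base of open subgroups at 0.
  Completeness: every proper Cauchy filter converges.\<close>

definition ANA_cauchy :: "('a \<times> 'a) filter \<Rightarrow> ('a \<Rightarrow>\<^sub>0 int) filter \<Rightarrow> bool" where
  "ANA_cauchy U F \<longleftrightarrow> F \<noteq> bot \<and>
     (\<forall>H\<in>ANA_nbhd_subgroups U. eventually (\<lambda>(a, b). b - a \<in> H) (F \<times>\<^sub>F F))"

definition ANA_converges_to :: "('a \<times> 'a) filter \<Rightarrow> ('a \<Rightarrow>\<^sub>0 int) filter \<Rightarrow> ('a \<Rightarrow>\<^sub>0 int) \<Rightarrow> bool" where
  "ANA_converges_to U F c \<longleftrightarrow>
     (\<forall>H\<in>ANA_nbhd_subgroups U. eventually (\<lambda>b. b - c \<in> H) F)"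

definition ANA_complete :: "('a \<times> 'a) filter \<Rightarrow> bool" where
  "ANA_complete U \<longleftrightarrow> (\<forall>F. ANA_cauchy U F \<longrightarrow> (\<exists>c. ANA_converges_to U F c))"

end

theory Submission
  imports Defs
begin

(*
  Fix a metric d inducing the uniformity. Non-discreteness and the non-archimedean
  property let us choose recursively distinct points a_k, b_k with d(a_k, b_k) -> 0 and
  equivalence entourages R_0 \<supseteq> R_1 \<supseteq> ... such that R_n separates all points
  a_k, b_k with k < n while (a_k, b_k) \<in> R_n for k \<ge> n.  The partial sums of the series
  \<Sum>_k (a_k - b_k) form a Cauchy sequence in A_NA.  Summing the coefficients over a
  saturated set A is a continuous homomorphism A_NA -> \<int> (its kernel is an open subgroup),
  so a limit c would have coefficient sum 1 on each of the M + 1 distinct R_(M+1)-classes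
  of a_0, ..., a_M, where M is the number of points in the support of c: impossible.
*)

lemma entourage_Int: "entourage U A \<Longrightarrow> entourage U B \<Longrightarrow> entourage U (A \<inter> B)"
  by (simp add: entourage_def eventually_conj_iff)

lemma entourage_mono: "entourage U A \<Longrightarrow> A \<subseteq> B \<Longrightarrow> entourage U B"
  unfolding entourage_def by (auto elim: eventually_mono)

lemma equiv_class_mem_cong: "equiv UNIV R \<Longrightarrow> (x, y) \<in> R \<Longrightarrow> x \<in> R``{z} \<longleftrightarrow> y \<in> R``{z}"
  by (metis Image_singleton_iff UNIV_I equiv_class_eq_iff)

lemma is_subgroup_add: "is_subgroup H \<Longrightarrow> a \<in> H \<Longrightarrow> b \<in> H \<Longrightarrow> a + b \<in> H"
  unfolding is_subgroup_def by (metis diff_0 diff_minus_eq_add)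

lemma is_subgroup_sum: "is_subgroup H \<Longrightarrow> (\<And>k. k \<in> K \<Longrightarrow> t k \<in> H) \<Longrightarrow> sum t K \<in> H"
  by (induction K rule: infinite_finite_induct) (auto simp: is_subgroup_def intro: is_subgroup_add)

definition coeff_sum :: "'a set \<Rightarrow> ('a \<Rightarrow>\<^sub>0 int) \<Rightarrow> int" where
  "coeff_sum A f = (\<Sum>x \<in> A \<inter> Poly_Mapping.keys f. poly_mapping.lookup f x)"

lemma coeff_sum_eq_sum_superset:
  assumes "finite K" "Poly_Mapping.keys f \<subseteq> K"
  shows "coeff_sum A f = (\<Sum>x \<in> A \<inter> K. poly_mapping.lookup f x)"
  unfolding coeff_sum_def
  by (rule sum.mono_neutral_left) (use assms in \<open>auto simp: in_keys_iff\<close>)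

lemma coeff_sum_zero [simp]: "coeff_sum A 0 = 0"
  by (simp add: coeff_sum_def)

lemma coeff_sum_add: "coeff_sum A (f + g) = coeff_sum A f + coeff_sum A g"
proof -
  let ?K = "Poly_Mapping.keys f \<union> Poly_Mapping.keys g"
  have "coeff_sum A (f + g) = (\<Sum>x \<in> A \<inter> ?K. poly_mapping.lookup f x + poly_mapping.lookup g x)"
    by (subst coeff_sum_eq_sum_superset[of ?K]) (simp_all add: keys_add lookup_add)
  also have "\<dots> = coeff_sum A f + coeff_sum A g"
    by (simp add: sum.distrib coeff_sum_eq_sum_superset[of ?K])
  finally show ?thesis .
qed

lemma coeff_sum_diff: "coeff_sum A (f - g) = coeff_sum A f - coeff_sum A g"
  using coeff_sum_add[of A "f - g" g] by simp

lemma coeff_sum_sum: "coeff_sum A (sum g K) = (\<Sum>k\<in>K. coeff_sum A (g k))"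
  by (induction K rule: infinite_finite_induct) (simp_all add: coeff_sum_add)

lemma coeff_sum_free_gen: "coeff_sum A (free_gen x) = (if x \<in> A then 1 else 0)"
  by (auto simp: coeff_sum_def free_gen_def lookup_single)

lemma coeff_sum_kernel_nbhd_subgroup:
  assumes "entourage U R" and saturated: "\<And>x y. (x, y) \<in> R \<Longrightarrow> x \<in> A \<longleftrightarrow> y \<in> A"
  shows "{f. coeff_sum A f = 0} \<in> ANA_nbhd_subgroups U"
proof -
  have "R \<subseteq> {(x, y). free_gen x - free_gen y \<in> {f. coeff_sum A f = 0}}"
    using saturated by (auto simp: coeff_sum_diff coeff_sum_free_gen)
  then show ?thesis
    unfolding ANA_nbhd_subgroups_def is_subgroup_def
    using entourage_mono[OF assms(1)] by (simp add: coeff_sum_diff)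
qed

lemma ANA_converges_coeff_sum:
  assumes "ANA_converges_to U F c" "entourage U R" "\<And>x y. (x, y) \<in> R \<Longrightarrow> x \<in> A \<longleftrightarrow> y \<in> A"
  shows "eventually (\<lambda>f. coeff_sum A f = coeff_sum A c) F"
  using assms(1) coeff_sum_kernel_nbhd_subgroup[OF assms(2,3)]
  unfolding ANA_converges_to_def by (fastforce simp: coeff_sum_diff elim: eventually_mono)

lemma ANA_cauchy_partial_sums:
  assumes "\<And>H. H \<in> ANA_nbhd_subgroups U \<Longrightarrow> eventually (\<lambda>k. t k \<in> H) sequentially"
  shows "ANA_cauchy U (filtermap (\<lambda>n. \<Sum>k<n. t k) sequentially)"
  unfolding ANA_cauchy_def
proof (intro conjI ballI)
  show "filtermap (\<lambda>n. \<Sum>k<n. t k) sequentially \<noteq> bot"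
    by (simp add: filtermap_bot_iff)
next
  fix H assume "H \<in> ANA_nbhd_subgroups U"
  then have H: "is_subgroup H"
    by (simp add: ANA_nbhd_subgroups_def)
  obtain N where N: "\<And>k. N \<le> k \<Longrightarrow> t k \<in> H"
    using assms[OF \<open>H \<in> ANA_nbhd_subgroups U\<close>] by (auto simp: eventually_sequentially)
  have tail: "(\<Sum>k<n. t k) - (\<Sum>k<N. t k) \<in> H" if "N \<le> n" for n
  proof -
    have "(\<Sum>k<n. t k) - (\<Sum>k<N. t k) = sum t {N..<n}"
      using that by (simp add: atLeast0LessThan[symmetric] sum_diff_nat_ivl)
    then show ?thesis
      using is_subgroup_sum[OF H, of "{N..<n}" t] N by simp
  qed
  have "(\<Sum>k<n. t k) - (\<Sum>k<m. t k) \<in> H" if "N \<le> m" "N \<le> n" for m n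
  proof -
    have "((\<Sum>k<n. t k) - (\<Sum>k<N. t k)) - ((\<Sum>k<m. t k) - (\<Sum>k<N. t k)) \<in> H"
      using H tail[OF that(1)] tail[OF that(2)] unfolding is_subgroup_def by blast
    then show ?thesis
      by simp
  qed
  then have "eventually (\<lambda>(m, n). (\<Sum>k<n. t k) - (\<Sum>k<m. t k) \<in> H) (sequentially \<times>\<^sub>F sequentially)"
    unfolding eventually_prod_sequentially by blast
  then show "eventually (\<lambda>(x, y). y - x \<in> H)
      (filtermap (\<lambda>n. \<Sum>k<n. t k) sequentially \<times>\<^sub>F filtermap (\<lambda>n. \<Sum>k<n. t k) sequentially)"
    unfolding filtermap_prod_filter[symmetric] eventually_filtermap
    by (simp add: map_prod_def case_prod_unfold)
qed

lemma coeff_sum_class_partial_sum: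
  fixes a b :: "nat \<Rightarrow> 'a"
  assumes R: "equiv UNIV R" and "j \<le> M" "M < n"
    and sep_a: "\<And>i k. i \<le> M \<Longrightarrow> k \<le> M \<Longrightarrow> (a i, a k) \<in> R \<longleftrightarrow> i = k"
    and sep_b: "\<And>i k. i \<le> M \<Longrightarrow> k \<le> M \<Longrightarrow> (a i, b k) \<notin> R"
    and tail: "\<And>k. M < k \<Longrightarrow> (a k, b k) \<in> R"
  shows "coeff_sum (R``{a j}) (\<Sum>k<n. free_gen (a k) - free_gen (b k)) = 1"
proof -
  have "coeff_sum (R``{a j}) (free_gen (a k) - free_gen (b k)) = (if k = j then 1 else 0)" for k
  proof (cases "k \<le> M")
    case True
    then show ?thesis
      using sep_a[OF \<open>j \<le> M\<close> True] sep_b[OF \<open>j \<le> M\<close> True]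
      by (auto simp: coeff_sum_diff coeff_sum_free_gen)
  next
    case False
    then have "M < k"
      by simp
    then have "a k \<in> R``{a j} \<longleftrightarrow> b k \<in> R``{a j}"
      by (rule equiv_class_mem_cong[OF R tail])
    then show ?thesis
      using False \<open>j \<le> M\<close> by (simp add: coeff_sum_diff coeff_sum_free_gen)
  qed
  then show ?thesis
    using \<open>j \<le> M\<close> \<open>M < n\<close> by (simp add: coeff_sum_sum)
qed

lemma coeff_sum_class_of_limit:
  fixes a b :: "nat \<Rightarrow> 'a"
  assumes lim: "ANA_converges_to U (filtermap (\<lambda>n. \<Sum>k<n. free_gen (a k) - free_gen (b k)) sequentially) c"
    and R: "equiv UNIV R" "entourage U R" and "j \<le> M"
    and sep_a: "\<And>i k. i \<le> M \<Longrightarrow> k \<le> M \<Longrightarrow> (a i, a k) \<in> R \<longleftrightarrow> i = k"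
    and sep_b: "\<And>i k. i \<le> M \<Longrightarrow> k \<le> M \<Longrightarrow> (a i, b k) \<notin> R"
    and tail: "\<And>k. M < k \<Longrightarrow> (a k, b k) \<in> R"
  shows "coeff_sum (R``{a j}) c = 1"
proof -
  let ?s = "\<lambda>n. \<Sum>k<n. free_gen (a k) - free_gen (b k)"
  have "eventually (\<lambda>n. coeff_sum (R``{a j}) (?s n) = coeff_sum (R``{a j}) c) sequentially"
    using ANA_converges_coeff_sum[OF lim R(2) equiv_class_mem_cong[OF R(1)]]
    by (simp add: eventually_filtermap)
  moreover have "eventually (\<lambda>n. coeff_sum (R``{a j}) (?s n) = 1) sequentially"
    using coeff_sum_class_partial_sum[OF R(1) \<open>j \<le> M\<close> _ sep_a sep_b tail]
    by (auto simp: eventually_sequentially Suc_le_eq intro: exI[of _ "Suc M"])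
  ultimately have "eventually (\<lambda>n. coeff_sum (R``{a j}) c = 1) sequentially"
    by eventually_elim simp
  then show ?thesis
    by simp
qed

lemma card_keys_gt_of_coeff_sum_classes:
  fixes a :: "nat \<Rightarrow> 'a"
  assumes R: "equiv UNIV R"
    and nonzero: "\<And>j. j \<le> M \<Longrightarrow> coeff_sum (R``{a j}) c \<noteq> 0"
    and sep: "\<And>i j. i \<le> M \<Longrightarrow> j \<le> M \<Longrightarrow> (a i, a j) \<in> R \<Longrightarrow> i = j"
  shows "M < card (Poly_Mapping.keys c)"
proof -
  have "inj_on (\<lambda>j. R``{a j}) {..M}"
    using sep eq_equiv_class_iff[OF R] by (auto intro: inj_onI)
  then have "Suc M = card ((\<lambda>j. R``{a j}) ` {..M})"
    by (simp add: card_image)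
  also have "\<dots> \<le> card ((\<lambda>x. R``{x}) ` Poly_Mapping.keys c)"
  proof (intro card_mono finite_imageI finite_keys subsetI)
    fix C assume "C \<in> (\<lambda>j. R``{a j}) ` {..M}"
    then obtain j where "j \<le> M" "C = R``{a j}"
      by auto
    moreover have "C \<inter> Poly_Mapping.keys c \<noteq> {}"
      using nonzero[OF \<open>j \<le> M\<close>] \<open>C = R``{a j}\<close> by (metis coeff_sum_def sum.empty)
    ultimately obtain x where "x \<in> C" "x \<in> Poly_Mapping.keys c"
      by blast
    then show "C \<in> (\<lambda>x. R``{x}) ` Poly_Mapping.keys c"
      using \<open>C = R``{a j}\<close> equiv_class_eq_iff[OF R] by blast
  qed
  also have "\<dots> \<le> card (Poly_Mapping.keys c)"
    by (rule card_image_le) simp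
  finally show ?thesis
    by simp
qed

locale na_metric_uniformity = Metric_space "UNIV :: 'a set" d
  for U :: "('a \<times> 'a) filter" and d +
  assumes uniformity_eq: "U = (INF e\<in>{0<..}. principal {(x, y). d x y < e})"
    and non_archimedean: "non_archimedean U"
    and non_discrete: "\<not> discrete_uniformity U"
begin

lemma entourage_iff_ball: "entourage U E \<longleftrightarrow> (\<exists>e>0. {(x, y). d x y < e} \<subseteq> E)"
proof -
  have "entourage U E \<longleftrightarrow> (\<exists>e\<in>{0<..}. eventually (\<lambda>p. p \<in> E) (principal {(x, y). d x y < e}))"
    unfolding entourage_def uniformity_eq
  proof (rule eventually_INF_base)
    fix a b :: real assume "a \<in> {0<..}" "b \<in> {0<..}"
    then show "\<exists>c\<in>{0<..}. principal {(x, y). d x y < c}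
        \<le> inf (principal {(x, y). d x y < a}) (principal {(x, y). d x y < b})"
      by (intro bexI[of _ "min a b"]) auto
  qed simp
  then show ?thesis
    by (auto simp: eventually_principal)
qed

lemma entourage_ball: "e > 0 \<Longrightarrow> entourage U {(x, y). d x y < e}"
  by (auto simp: entourage_iff_ball)

lemma finite_separated:
  assumes "finite P"
  obtains \<delta> where "\<delta> > 0" "\<And>p q. p \<in> P \<Longrightarrow> q \<in> P \<Longrightarrow> d p q < \<delta> \<Longrightarrow> p = q"
proof
  define D where "D = insert 1 {d p q |p q. p \<in> P \<and> q \<in> P \<and> p \<noteq> q}"
  have "finite D"
  proof -
    have "D \<subseteq> insert 1 ((\<lambda>(p, q). d p q) ` (P \<times> P))"
      by (auto simp: D_def)
    then show ?thesis
      using assms finite_subset by blast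
  qed
  show "Min D > 0"
    using \<open>finite D\<close> by (auto simp: D_def order_le_less)
  show "p = q" if "p \<in> P" "q \<in> P" "d p q < Min D" for p q
    using that \<open>finite D\<close> Min_le[of D "d p q"] by (force simp: D_def)
qed

definition close_pairs_outside :: "'a set \<Rightarrow> bool" where
  "close_pairs_outside F \<longleftrightarrow> (\<forall>e>0. \<exists>x y. x \<noteq> y \<and> x \<notin> F \<and> y \<notin> F \<and> d x y < e)"

lemma close_pairs_outside_empty: "close_pairs_outside {}"
  using non_discrete
  by (force simp: close_pairs_outside_def discrete_uniformity_def entourage_iff_ball)

lemma close_pairs_outside_insert:
  assumes "close_pairs_outside F"
  shows "close_pairs_outside (insert f F)"
proof -
  let ?pair = "\<lambda>r. \<exists>x y. x \<noteq> y \<and> x \<notin> insert f F \<and> y \<notin> insert f F \<and> d x y < r"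
  have pair_or_near_f: "?pair r \<or> (\<exists>z. z \<notin> insert f F \<and> d f z < r)" if "r > 0" for r
  proof -
    obtain x y where "x \<noteq> y" "x \<notin> F" "y \<notin> F" "d x y < r"
      using assms \<open>r > 0\<close> by (auto simp: close_pairs_outside_def)
    then show ?thesis
      by (metis commute insertE)
  qed
  show ?thesis
    unfolding close_pairs_outside_def
  proof (intro allI impI)
    fix e :: real assume "e > 0"
    show "?pair e"
    proof (cases "?pair (e/2)")
      case False
      with pair_or_near_f obtain z where z: "z \<notin> insert f F" "d f z < e/2"
        using \<open>e > 0\<close> by (meson half_gt_zero)
      then have "d f z > 0"
        by (metis insertI1 nonneg order_le_less zero UNIV_I)
      show ?thesis
      proof (cases "?pair (d f z)")
        case False
        with pair_or_near_f obtain w where w: "w \<notin> insert f F" "d f w < d f z"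
          using \<open>d f z > 0\<close> by blast
        \<comment> \<open>\<open>w\<close> and \<open>z\<close> both lie within \<open>e/2\<close> of \<open>f\<close>, and \<open>w \<noteq> z\<close> since \<open>w\<close> is closer.\<close>
        have "d z w \<le> d z f + d f w"
          by (rule triangle) auto
        then have "d z w < e"
          using z w commute[of z f] by linarith
        then show ?thesis
          using z w by (intro exI[of _ z] exI[of _ w]) auto
      next
        case True
        then obtain x y where xy: "x \<noteq> y" "x \<notin> insert f F" "y \<notin> insert f F" "d x y < d f z"
          by blast
        have "d x y < e"
          using xy(4) z(2) \<open>d f z > 0\<close> by linarith
        with xy show ?thesis
          by blast
      qed
    next
      case True
      then obtain x y where xy: "x \<noteq> y" "x \<notin> insert f F" "y \<notin> insert f F" "d x y < e/2"
        by blast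
      have "d x y < e"
        using xy(4) nonneg[of x y] by linarith
      with xy show ?thesis
        by blast
    qed
  qed
qed

lemma close_pairs_outside_finite: "finite F \<Longrightarrow> close_pairs_outside F"
  by (induction F rule: finite_induct) (auto intro: close_pairs_outside_empty close_pairs_outside_insert)

lemma fresh_pair_finer_relation:
  assumes "finite P" "entourage U R" "e > 0"
  obtains a b R' where "a \<noteq> b" "a \<notin> P" "b \<notin> P" "(a, b) \<in> R"
    "equiv UNIV R'" "entourage U R'" "R' \<subseteq> R" "R' \<subseteq> {(x, y). d x y < e}"
    "R' \<inter> (insert a (insert b P) \<times> insert a (insert b P)) \<subseteq> Id"
proof -
  obtain \<epsilon> where "\<epsilon> > 0" and ball_R: "{(x, y). d x y < \<epsilon>} \<subseteq> R"
    using assms(2) entourage_iff_ball by blast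
  obtain a b where ab: "a \<noteq> b" "a \<notin> P" "b \<notin> P" "d a b < \<epsilon>"
    using close_pairs_outside_finite[OF assms(1)] \<open>\<epsilon> > 0\<close> unfolding close_pairs_outside_def by blast
  let ?P' = "insert a (insert b P)"
  have "finite ?P'"
    using assms(1) by simp
  then obtain \<delta> where "\<delta> > 0" and sep: "\<And>p q. p \<in> ?P' \<Longrightarrow> q \<in> ?P' \<Longrightarrow> d p q < \<delta> \<Longrightarrow> p = q"
    using finite_separated by blast
  have "entourage U (R \<inter> {(x, y). d x y < min \<delta> e})"
    using assms(2) entourage_ball[of "min \<delta> e"] \<open>\<delta> > 0\<close> \<open>e > 0\<close> by (intro entourage_Int) auto
  then obtain R' where R': "equiv UNIV R'" "entourage U R'" "R' \<subseteq> R \<inter> {(x, y). d x y < min \<delta> e}"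
    using non_archimedean unfolding non_archimedean_def by blast
  show ?thesis
  proof (rule that[of a b R'])
    show "(a, b) \<in> R"
      using ab(4) ball_R by blast
    show "R' \<inter> (?P' \<times> ?P') \<subseteq> Id"
      using R'(3) sep by auto
  qed (use ab R' in auto)
qed

lemma separating_chain:
  obtains R :: "nat \<Rightarrow> ('a \<times> 'a) set" and P :: "nat \<Rightarrow> 'a set" and a b :: "nat \<Rightarrow> 'a"
  where "\<And>n. equiv UNIV (R n)" "\<And>n. entourage U (R n)" "\<And>n. R (Suc n) \<subseteq> R n"
    "\<And>n. R n \<subseteq> {(x, y). d x y < (1/2)^n}" "\<And>n. R n \<inter> (P n \<times> P n) \<subseteq> Id"
    "\<And>n. a n \<noteq> b n" "\<And>n. a n \<notin> P n" "\<And>n. b n \<notin> P n" "\<And>n. (a n, b n) \<in> R n"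
    "\<And>n. P (Suc n) = insert (a n) (insert (b n) (P n))"
proof -
  \<comment> \<open>A state is the finite set of points chosen so far together with the current relation.\<close>
  define inv where "inv n s \<longleftrightarrow> finite (fst s) \<and> equiv UNIV (snd s) \<and> entourage U (snd s)
      \<and> snd s \<subseteq> {(x, y). d x y < (1/2)^n} \<and> snd s \<inter> (fst s \<times> fst s) \<subseteq> Id"
    for n and s :: "'a set \<times> ('a \<times> 'a) set"
  define step where "step s s' \<longleftrightarrow> snd s' \<subseteq> snd s \<and> (\<exists>a b. a \<noteq> b \<and> a \<notin> fst s \<and> b \<notin> fst s
      \<and> (a, b) \<in> snd s \<and> fst s' = insert a (insert b (fst s)))"
    for s s' :: "'a set \<times> ('a \<times> 'a) set"
  have "\<exists>f. \<forall>n. inv n (f n) \<and> step (f n) (f (Suc n))"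
  proof (rule dependent_nat_choice)
    obtain R0 where "equiv UNIV R0" "entourage U R0" "R0 \<subseteq> {(x, y). d x y < 1}"
      using non_archimedean entourage_ball[of 1] unfolding non_archimedean_def by auto
    then show "\<exists>s. inv 0 s"
      unfolding inv_def by (intro exI[of _ "({}, R0)"]) simp
  next
    fix s n assume "inv n s"
    then have "finite (fst s)" "entourage U (snd s)"
      by (simp_all add: inv_def)
    then obtain a b R' where "a \<noteq> b" "a \<notin> fst s" "b \<notin> fst s" "(a, b) \<in> snd s"
      "equiv UNIV R'" "entourage U R'" "R' \<subseteq> snd s" "R' \<subseteq> {(x, y). d x y < (1/2)^Suc n}"
      "R' \<inter> (insert a (insert b (fst s)) \<times> insert a (insert b (fst s))) \<subseteq> Id"
      using fresh_pair_finer_relation[of "fst s" "snd s" "(1/2)^Suc n"] by auto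
    with \<open>inv n s\<close> show "\<exists>s'. inv (Suc n) s' \<and> step s s'"
      unfolding inv_def step_def by (intro exI[of _ "(insert a (insert b (fst s)), R')"]) auto
  qed
  then obtain f where f: "\<And>n. inv n (f n)" "\<And>n. step (f n) (f (Suc n))"
    by blast
  define P where "P n = fst (f n)" for n
  define R where "R n = snd (f n)" for n
  have "\<forall>n. \<exists>a b. a \<noteq> b \<and> a \<notin> P n \<and> b \<notin> P n \<and> (a, b) \<in> R n
      \<and> P (Suc n) = insert a (insert b (P n))"
    using f(2) unfolding step_def P_def R_def by blast
  then obtain a b where "\<And>n. a n \<noteq> b n" "\<And>n. a n \<notin> P n" "\<And>n. b n \<notin> P n"
    "\<And>n. (a n, b n) \<in> R n" "\<And>n. P (Suc n) = insert (a n) (insert (b n) (P n))"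
    by metis
  moreover have "R (Suc n) \<subseteq> R n" for n
    using f(2) unfolding step_def R_def by blast
  moreover have "equiv UNIV (R n)" "entourage U (R n)" "R n \<subseteq> {(x, y). d x y < (1/2)^n}"
    "R n \<inter> (P n \<times> P n) \<subseteq> Id" for n
    using f(1)[of n] unfolding inv_def P_def R_def by blast+
  ultimately show thesis
    using that by blast
qed

lemma separated_pair_sequence:
  obtains R :: "nat \<Rightarrow> ('a \<times> 'a) set" and a b :: "nat \<Rightarrow> 'a"
  where "\<And>n. equiv UNIV (R n)" "\<And>n. entourage U (R n)"
    "(\<lambda>k. d (a k) (b k)) \<longlonglongrightarrow> 0"
    "\<And>k n. n \<le> k \<Longrightarrow> (a k, b k) \<in> R n"
    "\<And>i k n. i < n \<Longrightarrow> k < n \<Longrightarrow> (a i, a k) \<in> R n \<longleftrightarrow> i = k"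
    "\<And>i k n. i < n \<Longrightarrow> k < n \<Longrightarrow> (a i, b k) \<notin> R n"
proof -
  obtain R P a b where R: "\<And>n. equiv UNIV (R n)" "\<And>n. entourage U (R n)" "\<And>n. R (Suc n) \<subseteq> R n"
    "\<And>n. R n \<subseteq> {(x, y). d x y < (1/2)^n}" and separated: "\<And>n. R n \<inter> (P n \<times> P n) \<subseteq> Id"
    and ab: "\<And>n. a n \<noteq> b n" "\<And>n. a n \<notin> P n" "\<And>n. b n \<notin> P n" "\<And>n. (a n, b n) \<in> R n"
    and P_Suc: "\<And>n. P (Suc n) = insert (a n) (insert (b n) (P n))"
    using separating_chain by blast
  have R_antimono: "R k \<subseteq> R n" if "n \<le> k" for n k
    using R(3) that by (rule lift_Suc_antimono_le)
  have "P n \<subseteq> P (Suc n)" for n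
    unfolding P_Suc by blast
  then have P_mono: "P n \<subseteq> P k" if "n \<le> k" for n k
    using that by (rule lift_Suc_mono_le)
  have earlier: "a i \<in> P n" "b i \<in> P n" if "i < n" for i n
    using P_mono[of "Suc i" n] that unfolding P_Suc by auto
  have a_inj: "i = k" if "a i = a k" for i k
    using earlier(1)[of i k] earlier(1)[of k i] ab(2)[of i] ab(2)[of k] that
    by (cases i k rule: linorder_cases) auto
  have a_neq_b: "a i \<noteq> b k" for i k
    using earlier(1)[of i k] earlier(2)[of k i] ab(1)[of i] ab(2)[of i] ab(3)[of k]
    by (cases i k rule: linorder_cases) auto
  show thesis
  proof (rule that[OF R(1,2)])
    show "(a k, b k) \<in> R n" if "n \<le> k" for k n
      using R_antimono[OF that] ab(4) by blast
    show "(a i, a k) \<in> R n \<longleftrightarrow> i = k" if "i < n" "k < n" for i k n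
    proof
      assume "(a i, a k) \<in> R n"
      then show "i = k"
        using separated earlier(1)[OF that(1)] earlier(1)[OF that(2)] a_inj by blast
    next
      assume "i = k"
      then show "(a i, a k) \<in> R n"
        using equiv_class_self[OF R(1), of "a k"] by simp
    qed
    show "(a i, b k) \<notin> R n" if "i < n" "k < n" for i k n
      using separated earlier(1)[OF that(1)] earlier(2)[OF that(2)] a_neq_b by blast
    have "d (a k) (b k) < (1/2)^k" for k
      using R(4) ab(4) by blast
    then have "\<forall>\<^sub>F k in sequentially. d (a k) (b k) \<le> (1/2)^k"
      by (intro always_eventually allI less_imp_le)
    moreover have "(\<lambda>k. (1/2::real)^k) \<longlonglongrightarrow> 0"
      by (rule LIMSEQ_realpow_zero) simp_all
    ultimately show "(\<lambda>k. d (a k) (b k)) \<longlonglongrightarrow> 0"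
      using tendsto_sandwich[of "\<lambda>_. 0" "\<lambda>k. d (a k) (b k)" sequentially "\<lambda>k. (1/2)^k" 0]
      by simp
  qed
qed

lemma free_gen_diff_eventually_in_nbhd:
  assumes "(\<lambda>k. d (a k) (b k)) \<longlonglongrightarrow> 0" "H \<in> ANA_nbhd_subgroups U"
  shows "eventually (\<lambda>k. free_gen (a k) - free_gen (b k) \<in> H) sequentially"
proof -
  obtain \<epsilon> where "\<epsilon> > 0" and ball: "{(x, y). d x y < \<epsilon>} \<subseteq> {(x, y). free_gen x - free_gen y \<in> H}"
    using assms(2) by (auto simp: ANA_nbhd_subgroups_def entourage_iff_ball)
  have "eventually (\<lambda>k. d (a k) (b k) < \<epsilon>) sequentially"
    using order_tendstoD(2)[OF assms(1) \<open>\<epsilon> > 0\<close>] .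
  then show ?thesis
    by (rule eventually_mono) (use ball in blast)
qed

theorem ANA_not_complete: "\<not> ANA_complete U"
proof
  assume "ANA_complete U"
  obtain R :: "nat \<Rightarrow> ('a \<times> 'a) set" and a b :: "nat \<Rightarrow> 'a"
    where R: "\<And>n. equiv UNIV (R n)" "\<And>n. entourage U (R n)"
    and close: "(\<lambda>k. d (a k) (b k)) \<longlonglongrightarrow> 0"
    and tail: "\<And>k n. n \<le> k \<Longrightarrow> (a k, b k) \<in> R n"
    and sep_a: "\<And>i k n. i < n \<Longrightarrow> k < n \<Longrightarrow> (a i, a k) \<in> R n \<longleftrightarrow> i = k"
    and sep_b: "\<And>i k n. i < n \<Longrightarrow> k < n \<Longrightarrow> (a i, b k) \<notin> R n"
    using separated_pair_sequence by blast
  define s where "s n = (\<Sum>k<n. free_gen (a k) - free_gen (b k))" for n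
  have "ANA_cauchy U (filtermap s sequentially)"
    unfolding s_def by (intro ANA_cauchy_partial_sums free_gen_diff_eventually_in_nbhd[OF close])
  then obtain c where c: "ANA_converges_to U (filtermap s sequentially) c"
    using \<open>ANA_complete U\<close> by (auto simp: ANA_complete_def)
  define M where "M = card (Poly_Mapping.keys c)"
  let ?R = "R (Suc M)"
  have class_coeff_sum: "coeff_sum (?R``{a j}) c = 1" if "j \<le> M" for j
  proof (rule coeff_sum_class_of_limit[OF c[unfolded s_def] R(1,2) that])
    show "(a i, a k) \<in> ?R \<longleftrightarrow> i = k" if "i \<le> M" "k \<le> M" for i k
      using sep_a that by simp
    show "(a i, b k) \<notin> ?R" if "i \<le> M" "k \<le> M" for i k
      using sep_b that by simp
    show "(a k, b k) \<in> ?R" if "M < k" for k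
      using tail that by simp
  qed
  have "M < card (Poly_Mapping.keys c)"
  proof (rule card_keys_gt_of_coeff_sum_classes[OF R(1)])
    show "coeff_sum (?R``{a j}) c \<noteq> 0" if "j \<le> M" for j
      using class_coeff_sum that by simp
    show "i = j" if "i \<le> M" "j \<le> M" "(a i, a j) \<in> ?R" for i j
      using sep_a that by simp
  qed
  then show False
    by (simp add: M_def)
qed

end

theorem theorem4p21:
  fixes U :: "('a \<times> 'a) filter"
  assumes "uniform_space_on U"
    and "non_archimedean U"
    and "metrizable_uniformity U"
    and "\<not> discrete_uniformity U"
  shows "\<not> ANA_complete U"
proof -
  \<comment> \<open>The uniform-space axioms follow from metrizability.\<close>
  obtain d where "is_metric d" "U = (INF e\<in>{0<..}. principal {(x, y). d x y < e})"
    using assms(3) unfolding metrizable_uniformity_def by blast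
  then interpret na_metric_uniformity U d
    using assms(2,4) by unfold_locales (auto simp: is_metric_def)
  show ?thesis
    by (rule ANA_not_complete)
qed

end
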